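(* Let $G$ be a Carnot group, let $D_G$ be the dimension provided by the theorem that for every $0<\varepsilon<1/2$, $(G,d_G^{1-\varepsilon})$ embeds into $\mathbb{R}^{D_G}$ with distortion $O_G(\varepsilon^{-1/2})$. Let $\Gamma\subset G$ be a discrete subgroup such that $d_G(\gamma_1,\gamma_2)\ge 1$ for all distinct $\gamma_1,\gamma_2\in\Gamma$. For $R\ge 2$ let $B_\Gamma(0,R)=\{\gamma\in\Gamma: d_G(0,\gamma)<R\}$, where $0$ is the identity of $G$. Then $(B_\Gamma(0,R),d_G)$ admits an embedding into $\mathbb{R}^{D_G}$ with distortion $O_G(\log^{1/2}R)$.
   Context: A Carnot group $G$ is a connected, simply connected Lie group with stratified Lie algebra $\mathfrak g=V_1\oplus\cdots\oplus V_s$, $V_{r+1}=[V_1,V_r]$, $V_{s+1}=0$, with a norm on $V_1$; $d_G$ is the associated Carnot–Carathéodory distance (infimum of lengths of horizontal piecewise smooth curves). A map $f:(X,d_X)\to(Y,d_Y)$ has distortion at most $D$ if there is $C>0$ with $Cd_X(x_1,x_2)\le d_Y(f(x_1),f(x_2))\le CDd_X(x_1,x_2)$ for all $x_1,x_2$. *)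

theory Defs
  imports "HOL-Analysis.Analysis"
begin

fun Ck :: "nat \<Rightarrow> ('a::euclidean_space \<Rightarrow> 'b::real_normed_vector) \<Rightarrow> bool" where
  "Ck 0 f = continuous_on UNIV f"
| "Ck (Suc k) f = ((\<forall>x. f differentiable (at x)) \<and>
                   (\<forall>v. Ck k (\<lambda>x. frechet_derivative f (at x) v)))"

definition smooth_map :: "('a::euclidean_space \<Rightarrow> 'b::real_normed_vector) \<Rightarrow> bool" where
  "smooth_map f \<longleftrightarrow> (\<forall>k. Ck k f)"

definition group_law :: "('a::real_vector \<Rightarrow> 'a \<Rightarrow> 'a) \<Rightarrow> bool" where
  "group_law m \<longleftrightarrow> (\<forall>x y z. m (m x y) z = m x (m y z)) \<and> (\<forall>x. m x 0 = x \<and> m 0 x = x)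
     \<and> (\<forall>x. \<exists>y. m x y = 0 \<and> m y x = 0)"

text \<open>Second-order (bilinear) term of the group law at the identity and the Lie bracket
  of the Lie algebra (identified with the tangent space at 0).\<close>
definition bilin_term :: "('a::real_normed_vector \<Rightarrow> 'a \<Rightarrow> 'a) \<Rightarrow> 'a \<Rightarrow> 'a \<Rightarrow> 'a" where
  "bilin_term m v w = vector_derivative
      (\<lambda>s. vector_derivative (\<lambda>t. m (t *\<^sub>R v) (s *\<^sub>R w)) (at 0)) (at 0)"

definition lie_bracket :: "('a::real_normed_vector \<Rightarrow> 'a \<Rightarrow> 'a) \<Rightarrow> 'a \<Rightarrow> 'a \<Rightarrow> 'a" where
  "lie_bracket m v w = bilin_term m v w - bilin_term m w v"

definition stratified :: "('a::real_normed_vector \<Rightarrow> 'a \<Rightarrow> 'a) \<Rightarrow> (nat \<Rightarrow> 'a set) \<Rightarrow> nat \<Rightarrow> bool" where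
  "stratified m V s \<longleftrightarrow> s \<ge> 1 \<and> (\<forall>i\<in>{1..s}. subspace (V i))
     \<and> (\<forall>x. \<exists>!u. (\<forall>i. i \<notin> {1..s} \<longrightarrow> u i = 0) \<and> (\<forall>i\<in>{1..s}. u i \<in> V i)
                  \<and> x = (\<Sum>i=1..s. u i))
     \<and> (\<forall>r\<in>{1..<s}. V (Suc r) = span {lie_bracket m a b | a b. a \<in> V 1 \<and> b \<in> V r})
     \<and> (\<forall>a\<in>V 1. \<forall>b\<in>V s. lie_bracket m a b = 0)"

definition norm_on :: "'a::real_vector set \<Rightarrow> ('a \<Rightarrow> real) \<Rightarrow> bool" where
  "norm_on W N \<longleftrightarrow> (\<forall>x\<in>W. N x \<ge> 0 \<and> (N x = 0 \<longleftrightarrow> x = 0))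
     \<and> (\<forall>c. \<forall>x\<in>W. N (c *\<^sub>R x) = \<bar>c\<bar> * N x)
     \<and> (\<forall>x\<in>W. \<forall>y\<in>W. N (x + y) \<le> N x + N y)"

text \<open>Carnot group (in exponential-type coordinates on R^n, identity 0).\<close>
definition carnot :: "(real^'n \<Rightarrow> real^'n \<Rightarrow> real^'n) \<Rightarrow> (nat \<Rightarrow> (real^'n) set) \<Rightarrow> nat
                      \<Rightarrow> (real^'n \<Rightarrow> real) \<Rightarrow> bool" where
  "carnot m V s N \<longleftrightarrow> group_law m \<and> smooth_map (\<lambda>p. m (fst p) (snd p))
     \<and> stratified m V s \<and> norm_on (V 1) N"

definition dL :: "('a::real_normed_vector \<Rightarrow> 'a \<Rightarrow> 'a) \<Rightarrow> 'a \<Rightarrow> 'a \<Rightarrow> 'a" where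
  "dL m x v = vector_derivative (\<lambda>t. m x (t *\<^sub>R v)) (at 0)"

definition horizontal :: "('a::euclidean_space \<Rightarrow> 'a \<Rightarrow> 'a) \<Rightarrow> (nat \<Rightarrow> 'a set) \<Rightarrow> ('a \<Rightarrow> real)
     \<Rightarrow> (real \<Rightarrow> 'a) \<Rightarrow> (real \<Rightarrow> 'a) \<Rightarrow> bool" where
  "horizontal m V N \<gamma> h \<longleftrightarrow> \<gamma> piecewise_C1_differentiable_on {0..1}
     \<and> (\<exists>S. finite S \<and> (\<forall>t\<in>{0..1} - S. h t \<in> V 1
            \<and> (\<gamma> has_vector_derivative dL m (\<gamma> t) (h t)) (at t within {0..1})))
     \<and> (\<lambda>t. N (h t)) integrable_on {0..1}"

definition cc_dist :: "('a::euclidean_space \<Rightarrow> 'a \<Rightarrow> 'a) \<Rightarrow> (nat \<Rightarrow> 'a set) \<Rightarrow> ('a \<Rightarrow> real)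
     \<Rightarrow> 'a \<Rightarrow> 'a \<Rightarrow> real" where
  "cc_dist m V N x y = Inf {integral {0..1} (\<lambda>t. N (h t)) | \<gamma> h.
       horizontal m V N \<gamma> h \<and> \<gamma> 0 = x \<and> \<gamma> 1 = y}"

definition distortion_le :: "('a \<Rightarrow> 'a \<Rightarrow> real) \<Rightarrow> 'a set \<Rightarrow> ('b \<Rightarrow> 'b \<Rightarrow> real) \<Rightarrow> ('a \<Rightarrow> 'b)
     \<Rightarrow> real \<Rightarrow> bool" where
  "distortion_le dX A dY f Dst \<longleftrightarrow> (\<exists>C>0. \<forall>x1\<in>A. \<forall>x2\<in>A.
      C * dX x1 x2 \<le> dY (f x1) (f x2) \<and> dY (f x1) (f x2) \<le> C * Dst * dX x1 x2)"

definition discrete_subgroup :: "('a::topological_space \<Rightarrow> 'a \<Rightarrow> 'a) \<Rightarrow> 'a \<Rightarrow> 'a set \<Rightarrow> bool" where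
  "discrete_subgroup m e \<Gamma> \<longleftrightarrow> e \<in> \<Gamma> \<and> (\<forall>x\<in>\<Gamma>. \<forall>y\<in>\<Gamma>. m x y \<in> \<Gamma>)
     \<and> (\<forall>x\<in>\<Gamma>. \<exists>y\<in>\<Gamma>. m x y = e \<and> m y x = e)
     \<and> (\<forall>g\<in>\<Gamma>. \<exists>U. open U \<and> U \<inter> \<Gamma> = {g})"

end

theory Submission
  imports Defs
begin

text \<open>
  On a 1-separated set the snowflake metric \<open>d\<^sup>1\<^sup>-\<^sup>\<epsilon>\<close> differs from \<open>d\<close> by the factor
  \<open>d\<^sup>\<epsilon>\<close>, which is at least 1 and, on a set of diameter \<open>O(R)\<close>, at most \<open>O(R\<^sup>\<epsilon>)\<close>.
  Choosing \<open>\<epsilon> = 1/(4 log R)\<close> makes \<open>R\<^sup>\<epsilon>\<close> bounded, so the snowflake embedding of \<open>G\<close>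
  with distortion \<open>O(\<epsilon>\<^sup>-\<^sup>1\<^sup>/\<^sup>2) = O(log\<^sup>1\<^sup>/\<^sup>2 R)\<close> restricts to an embedding of the ball
  \<open>B\<^sub>\<Gamma>(0,R)\<close> with the same distortion up to a constant.
\<close>

lemma distortion_le_subset:
  "distortion_le dX B dY f D \<Longrightarrow> A \<subseteq> B \<Longrightarrow> distortion_le dX A dY f D"
  unfolding distortion_le_def by blast

lemma powr_one_minus_le_self:
  fixes t e :: real
  assumes "1 \<le> t" "0 \<le> e"
  shows "t powr (1 - e) \<le> t"
  using powr_mono[of "1 - e" 1 t] assms by simp

lemma le_powr_mult_powr_one_minus:
  fixes t e M :: real
  assumes t: "1 \<le> t" and e: "0 \<le> e" "e \<le> 1/2" and M: "t powr (1 - e) \<le> M"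
  shows "t \<le> M powr (2 * e) * t powr (1 - e)"
proof -
  have "e * (2 * e) \<le> e * 1"
    using e by (intro mult_left_mono) auto
  then have "t powr e \<le> t powr ((1 - e) * (2 * e))"
    using t by (intro powr_mono) (auto simp: algebra_simps)
  also have "\<dots> = (t powr (1 - e)) powr (2 * e)"
    by (simp add: powr_powr)
  also have "\<dots> \<le> M powr (2 * e)"
    using M e by (intro powr_mono2) auto
  finally have "t powr e * t powr (1 - e) \<le> M powr (2 * e) * t powr (1 - e)"
    by (simp add: mult_right_mono)
  then show ?thesis
    using t by (simp flip: powr_add)
qed

lemma snowflake_dist_refl:
  fixes d :: "'a \<Rightarrow> 'a \<Rightarrow> real"
  assumes "distortion_le (\<lambda>x y. d x y powr a) A dY f D" "x \<in> A" "dY (f x) (f x) = 0"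
  shows "d x x = 0"
proof -
  obtain C where "C > 0" "C * d x x powr a \<le> dY (f x) (f x)"
    using assms(1,2) unfolding distortion_le_def by blast
  then have "d x x powr a \<le> 0"
    using assms(3) by (simp add: mult_le_0_iff)
  then show ?thesis
    using powr_ge_zero[of "d x x" a] by simp
qed

lemma snowflake_diameter_bound:
  fixes d :: "'a \<Rightarrow> 'a \<Rightarrow> real" and f :: "'a \<Rightarrow> 'b::metric_space"
  assumes f: "distortion_le (\<lambda>x y. d x y powr (1 - e)) A dist f D"
    and e: "0 \<le> e" and D: "0 \<le> D" and R: "1 \<le> R"
    and sep: "\<And>x y. x \<in> A \<Longrightarrow> y \<in> A \<Longrightarrow> x \<noteq> y \<Longrightarrow> 1 \<le> d x y"
    and z: "z \<in> A" and ball: "\<And>x. x \<in> A \<Longrightarrow> d z x < R"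
    and xy: "x \<in> A" "y \<in> A"
  shows "d x y powr (1 - e) \<le> 2 * D * R"
proof -
  obtain C where C: "C > 0" and bounds: "\<And>a b. a \<in> A \<Longrightarrow> b \<in> A \<Longrightarrow>
      C * d a b powr (1 - e) \<le> dist (f a) (f b) \<and> dist (f a) (f b) \<le> C * D * d a b powr (1 - e)"
    using f unfolding distortion_le_def by blast
  have from_centre: "dist (f z) (f a) \<le> C * D * R" if a: "a \<in> A" for a
  proof (cases "a = z")
    case True
    then show ?thesis using C D R by simp
  next
    case False
    have "d z a powr (1 - e) \<le> R"
      using powr_one_minus_le_self[OF sep[OF z a] e] ball[OF a] False by fastforce
    then have "C * D * d z a powr (1 - e) \<le> C * D * R"
      using C D by (simp add: mult_left_mono)
    then show ?thesis using bounds[OF z a] by linarith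
  qed
  have "C * d x y powr (1 - e) \<le> dist (f x) (f y)"
    using bounds[OF xy] by blast
  also have "\<dots> \<le> 2 * (C * D * R)"
    using dist_triangle3[of "f x" "f y" "f z"] from_centre[OF xy(1)] from_centre[OF xy(2)]
    by (simp add: dist_commute)
  finally show ?thesis
    using C by (simp add: mult.assoc)
qed

lemma distortion_le_of_snowflake_on_separated:
  fixes d :: "'a \<Rightarrow> 'a \<Rightarrow> real" and f :: "'a \<Rightarrow> 'b::metric_space"
  assumes f: "distortion_le (\<lambda>x y. d x y powr (1 - e)) A dist f D"
    and e: "0 \<le> e" "e \<le> 1/2"
    and sep: "\<And>x y. x \<in> A \<Longrightarrow> y \<in> A \<Longrightarrow> x \<noteq> y \<Longrightarrow> 1 \<le> d x y"
    and M: "1 \<le> M" "\<And>x y. x \<in> A \<Longrightarrow> y \<in> A \<Longrightarrow> d x y powr (1 - e) \<le> M"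
    and D': "D * M powr (2 * e) \<le> D'"
  shows "distortion_le d A dist f D'"
proof -
  obtain C where C: "C > 0" and bounds: "\<And>a b. a \<in> A \<Longrightarrow> b \<in> A \<Longrightarrow>
      C * d a b powr (1 - e) \<le> dist (f a) (f b) \<and> dist (f a) (f b) \<le> C * D * d a b powr (1 - e)"
    using f unfolding distortion_le_def by blast
  define S where "S = M powr (2 * e)"
  have S: "S > 0" using M(1) by (simp add: S_def)
  have "C / S * d x y \<le> dist (f x) (f y) \<and> dist (f x) (f y) \<le> C / S * D' * d x y"
    if xy: "x \<in> A" "y \<in> A" for x y
  proof (cases "x = y")
    case True
    then show ?thesis using snowflake_dist_refl[OF f xy(1)] by simp
  next
    case False
    define t where "t = d x y"
    have t: "1 \<le> t" using sep[OF xy False] by (simp add: t_def)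
    have "t powr (1 - e) \<le> M"
      using M(2)[OF xy] by (simp add: t_def)
    then have "t \<le> S * t powr (1 - e)"
      unfolding S_def by (rule le_powr_mult_powr_one_minus[OF t e])
    then have lower: "C / S * t \<le> C * t powr (1 - e)"
      using C S by (simp add: field_simps)
    have "C * t powr (1 - e) \<le> (C * D) * t powr (1 - e)"
      using bounds[OF xy] by (simp add: t_def)
    then have "C \<le> C * D"
      using t by (simp add: mult_le_cancel_right)
    then have "C * D * t powr (1 - e) \<le> C * D * t"
      using C powr_one_minus_le_self[OF t e(1)] by (intro mult_left_mono) auto
    also have "\<dots> = C / S * (D * S) * t"
      using S by simp
    also have "\<dots> \<le> C / S * D' * t"
      using C S t D' by (intro mult_right_mono mult_left_mono) (auto simp: S_def)
    finally have upper: "C * D * t powr (1 - e) \<le> C / S * D' * t" .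
    show ?thesis
      using bounds[OF xy] lower upper unfolding t_def by linarith
  qed
  then show ?thesis
    unfolding distortion_le_def using C S by (intro exI[of _ "C / S"]) auto
qed

lemma ln_gt_half: "2 \<le> (R::real) \<Longrightarrow> 1/2 < ln R"
  using ln2_ge_two_thirds ln_le_cancel_iff[of 2 R] by linarith

text \<open>This choice of \<open>e\<close> makes \<open>R powr (4 * e) = exp 1\<close>, which keeps the snowflake
  correction factor \<open>M powr (2 * e)\<close> bounded.\<close>

lemma log_scale_distortion_bound:
  fixes K R e :: real
  assumes K: "0 < K" and R: "2 \<le> R" and e: "e = 1 / (4 * ln R)"
  defines "D \<equiv> K * e powr (-1/2)"
  shows "0 < e" "e < 1/2" "0 \<le> D"
    and "D * max 1 (2 * D * R) powr (2 * e) \<le> 2 * exp 1 * K * max 1 (4 * K) * sqrt (ln R)"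
proof -
  have lnR: "1/2 < ln R" using ln_gt_half[OF R] .
  show e0: "0 < e" and e12: "e < 1/2"
    using lnR by (simp_all add: e field_simps)
  have "e powr (-1/2) = (4 * ln R) powr (1/2)"
    using lnR by (simp add: e powr_minus_divide powr_divide)
  also have "\<dots> = 2 * sqrt (ln R)"
    using lnR by (simp add: powr_half_sqrt real_sqrt_mult)
  finally have D: "D = 2 * K * sqrt (ln R)"
    by (simp add: D_def)
  then show "0 \<le> D" using K lnR by simp
  have "R \<le> R\<^sup>2"
    using R by (simp add: power2_eq_square)
  then have "ln R \<le> R\<^sup>2"
    using ln_le_minus_one[of R] R by linarith
  then have "sqrt (ln R) \<le> R"
    using R real_sqrt_le_mono by fastforce
  then have "2 * D * R \<le> 4 * K * R\<^sup>2"
    using D K R by (simp add: power2_eq_square)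
  also have "\<dots> \<le> max 1 (4 * K) * R\<^sup>2"
    by (intro mult_right_mono) auto
  finally have "max 1 (2 * D * R) \<le> max 1 (4 * K) * R\<^sup>2"
    using R by (simp add: mult_ge1_I one_le_power)
  then have "max 1 (2 * D * R) powr (2 * e) \<le> (max 1 (4 * K) * R\<^sup>2) powr (2 * e)"
    using e0 by (intro powr_mono2) auto
  also have "\<dots> = max 1 (4 * K) powr (2 * e) * R powr (4 * e)"
  proof -
    have "R\<^sup>2 = R powr 2" using R by simp
    then have "R\<^sup>2 powr (2 * e) = R powr (4 * e)" by (simp add: powr_powr)
    then show ?thesis by (simp add: powr_mult)
  qed
  also have "R powr (4 * e) = exp 1"
    using R lnR by (simp add: powr_def e)
  also have "max 1 (4 * K) powr (2 * e) \<le> max 1 (4 * K)"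
    using powr_mono[of "2 * e" 1 "max 1 (4 * K)"] e12 by simp
  finally have "max 1 (2 * D * R) powr (2 * e) \<le> max 1 (4 * K) * exp 1"
    by simp
  then show "D * max 1 (2 * D * R) powr (2 * e) \<le> 2 * exp 1 * K * max 1 (4 * K) * sqrt (ln R)"
    using mult_left_mono[of _ _ D] D K lnR by (simp add: algebra_simps)
qed

lemma distortion_le_on_separated_ball:
  fixes d :: "'a \<Rightarrow> 'a \<Rightarrow> real" and f :: "'a \<Rightarrow> 'b::metric_space"
  assumes K: "0 < K" and R: "2 \<le> R" and e: "e = 1 / (4 * ln R)"
    and f: "distortion_le (\<lambda>x y. d x y powr (1 - e)) A dist f (K * e powr (-1/2))"
    and sep: "\<And>x y. x \<in> A \<Longrightarrow> y \<in> A \<Longrightarrow> x \<noteq> y \<Longrightarrow> 1 \<le> d x y"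
    and z: "z \<in> A" and ball: "\<And>x. x \<in> A \<Longrightarrow> d z x < R"
  shows "distortion_le d A dist f (2 * exp 1 * K * max 1 (4 * K) * sqrt (ln R))"
proof -
  define D where "D = K * e powr (-1/2)"
  note scale = log_scale_distortion_bound[OF K R e, folded D_def]
  have "d x y powr (1 - e) \<le> max 1 (2 * D * R)" if "x \<in> A" "y \<in> A" for x y
    using snowflake_diameter_bound[OF f[folded D_def] _ scale(3) _ sep z ball that] scale(1) R
    by (simp add: max.coboundedI2)
  then show ?thesis
    using scale(1,2,4)
    by (intro distortion_le_of_snowflake_on_separated[OF f[folded D_def] _ _ sep]) auto
qed

theorem mainTheorem2:
  fixes m :: "real^'n \<Rightarrow> real^'n \<Rightarrow> real^'n" and V :: "nat \<Rightarrow> (real^'n) set"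
    and s :: nat and N :: "real^'n \<Rightarrow> real"
  assumes G: "carnot m V s N"
    and snowflake: "\<exists>K>0. \<forall>\<epsilon>::real. 0 < \<epsilon> \<and> \<epsilon> < 1/2 \<longrightarrow>
        (\<exists>f :: real^'n \<Rightarrow> real^'d.
           distortion_le (\<lambda>x y. (cc_dist m V N x y) powr (1 - \<epsilon>)) UNIV dist f (K * \<epsilon> powr (-1/2)))"
  shows "\<exists>C>0. \<forall>\<Gamma> R::real.
     discrete_subgroup m 0 \<Gamma>
     \<and> (\<forall>\<gamma>1\<in>\<Gamma>. \<forall>\<gamma>2\<in>\<Gamma>. \<gamma>1 \<noteq> \<gamma>2 \<longrightarrow> cc_dist m V N \<gamma>1 \<gamma>2 \<ge> 1)
     \<and> R \<ge> 2
     \<longrightarrow> (\<exists>f :: real^'n \<Rightarrow> real^'d.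
           distortion_le (cc_dist m V N) {\<gamma>\<in>\<Gamma>. cc_dist m V N 0 \<gamma> < R} dist f (C * sqrt (ln R)))"
proof -
  obtain K where K: "K > 0" and embed: "\<And>\<epsilon>. 0 < \<epsilon> \<Longrightarrow> \<epsilon> < 1/2 \<Longrightarrow>
      \<exists>f :: real^'n \<Rightarrow> real^'d.
        distortion_le (\<lambda>x y. (cc_dist m V N x y) powr (1 - \<epsilon>)) UNIV dist f (K * \<epsilon> powr (-1/2))"
    using snowflake by blast
  let ?d = "cc_dist m V N" and ?C = "2 * exp 1 * K * max 1 (4 * K)"
  have "\<exists>f :: real^'n \<Rightarrow> real^'d. distortion_le ?d {\<gamma>\<in>\<Gamma>. ?d 0 \<gamma> < R} dist f (?C * sqrt (ln R))"
    if \<Gamma>: "discrete_subgroup m 0 \<Gamma>" and sep: "\<forall>\<gamma>1\<in>\<Gamma>. \<forall>\<gamma>2\<in>\<Gamma>. \<gamma>1 \<noteq> \<gamma>2 \<longrightarrow> ?d \<gamma>1 \<gamma>2 \<ge> 1"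
      and R: "R \<ge> 2" for \<Gamma> R
  proof -
    define e where "e = 1 / (4 * ln R)"
    obtain f :: "real^'n \<Rightarrow> real^'d"
      where f: "distortion_le (\<lambda>x y. ?d x y powr (1 - e)) UNIV dist f (K * e powr (-1/2))"
      using embed log_scale_distortion_bound(1,2)[OF K R e_def] by blast
    have "?d 0 0 = 0"
      by (rule snowflake_dist_refl[OF f UNIV_I]) simp
    then have "0 \<in> {\<gamma>\<in>\<Gamma>. ?d 0 \<gamma> < R}"
      using \<Gamma> R unfolding discrete_subgroup_def by simp
    moreover have "distortion_le (\<lambda>x y. ?d x y powr (1 - e)) {\<gamma>\<in>\<Gamma>. ?d 0 \<gamma> < R} dist f
        (K * e powr (-1/2))"
      using f by (rule distortion_le_subset) simp
    ultimately have "distortion_le ?d {\<gamma>\<in>\<Gamma>. ?d 0 \<gamma> < R} dist f (?C * sqrt (ln R))"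
      using sep by (intro distortion_le_on_separated_ball[OF K R e_def]) auto
    then show ?thesis by blast
  qed
  then show ?thesis
    using K by (intro exI[of _ ?C]) auto
qed

end
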